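(* Let $D\subseteq\mathbb{R}^2$ be the closed unit disc and $S^1$ its boundary circle. There is a set $A\subseteq D$ which is completely $\mathcal{N}$-nonmeasurable in $D$ and such that for every line $l\subseteq\mathbb{R}^2$, with $\pi:\mathbb{R}^2\to l$ the orthogonal projection onto $l$, the set $\pi[A]$ is completely $\mathcal{N}$-nonmeasurable in $\pi[S^1]$. The same holds with $\mathcal{N}$ replaced by $\mathcal{M}$.
   Context: $\mathcal{N}$ denotes the $\sigma$-ideal of Lebesgue null sets and $\mathcal{M}$ the $\sigma$-ideal of meager sets (in the plane, resp. on the line $l$). For a $\sigma$-ideal $\mathcal{J}$ and a Borel set $Y$, a set $S$ is completely $\mathcal{J}$-nonmeasurable in $Y$ if for every Borel $B\subseteq Y$ with $B\notin\mathcal{J}$ we have $S\cap B\neq\emptyset$ and $B\setminus S\neq\emptyset$. *)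

theory Defs
  imports "HOL-Analysis.Analysis"
begin

definition nowhere_dense :: "'a::topological_space set \<Rightarrow> bool" where
  "nowhere_dense S \<longleftrightarrow> interior (closure S) = {}"

definition meager :: "'a::topological_space set \<Rightarrow> bool" where
  "meager S \<longleftrightarrow> (\<exists>F :: nat \<Rightarrow> 'a set. (\<forall>n. nowhere_dense (F n)) \<and> S \<subseteq> (\<Union>n. F n))"

definition completely_nonmeasurable ::
  "('a set \<Rightarrow> bool) \<Rightarrow> 'a set set \<Rightarrow> 'a set \<Rightarrow> 'a set \<Rightarrow> bool" where
  "completely_nonmeasurable J Bor Y S \<longleftrightarrow>
     (\<forall>B. B \<in> Bor \<and> B \<subseteq> Y \<and> \<not> J B \<longrightarrow> S \<inter> B \<noteq> {} \<and> B - S \<noteq> {})"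

definition plane_null :: "(real^2) set \<Rightarrow> bool" where
  "plane_null B \<longleftrightarrow> B \<in> null_sets lebesgue"

definition plane_meager :: "(real^2) set \<Rightarrow> bool" where
  "plane_meager B \<longleftrightarrow> meager B"

text \<open>The line l through p with unit direction u, parametrised isometrically by
  t \<mapsto> p + t u.  Borel sets, null sets and meager sets on l are transported from the
  real line along this isometry (this does not depend on the choice of p, u).\<close>
definition line_param :: "real^2 \<Rightarrow> real^2 \<Rightarrow> real \<Rightarrow> real^2" where
  "line_param p u t = p + t *\<^sub>R u"

definition line :: "real^2 \<Rightarrow> real^2 \<Rightarrow> (real^2) set" where
  "line p u = range (line_param p u)"

definition line_borel :: "real^2 \<Rightarrow> real^2 \<Rightarrow> (real^2) set set" where
  "line_borel p u = {B. B \<subseteq> line p u \<and> line_param p u -` B \<in> sets borel}"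

definition line_null :: "real^2 \<Rightarrow> real^2 \<Rightarrow> (real^2) set \<Rightarrow> bool" where
  "line_null p u B \<longleftrightarrow> line_param p u -` B \<in> null_sets lebesgue"

definition line_meager :: "real^2 \<Rightarrow> real^2 \<Rightarrow> (real^2) set \<Rightarrow> bool" where
  "line_meager p u B \<longleftrightarrow> meager (line_param p u -` B :: real set)"

definition orth_proj :: "real^2 \<Rightarrow> real^2 \<Rightarrow> real^2 \<Rightarrow> real^2" where
  "orth_proj p u x = p + ((x - p) \<bullet> u) *\<^sub>R u"

end

theory Submission
  imports Defs
begin

(* Well-order the reals so that every proper initial segment has fewer than continuum many
   elements.  Call the compact non-null sets (for category: the nonempty open sets intersected
   with countably many dense open sets) kernels.  Every Borel set outside the ideal, in the disc
   or on a line, contains a kernel; there are only continuum many kernels; a kernel on the line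
   has continuum many points; and a kernel in the plane is not covered by fewer than continuum
   many points and lines (Fubini, resp. Kuratowski-Ulam, as two lines meet in at most one point).
   A recursion along the well-order then treats every plane kernel W and every direction u with
   a kernel C on the projection line: it puts a point of W into A and keeps another one out, adds
   a point of the disc projecting into C, and reserves a line orthogonal to u over a point of C
   that A must avoid.  Each step commits only finitely many points and lines. *)

unbundle cardinal_syntax

section \<open>Sets of cardinality less than the continuum\<close>

definition less_continuum :: "'a set \<Rightarrow> bool" where
  "less_continuum X \<longleftrightarrow> |X| <o |UNIV :: real set|"

lemma less_continuum_subset: "X \<subseteq> Y \<Longrightarrow> less_continuum Y \<Longrightarrow> less_continuum X"
  unfolding less_continuum_def using card_of_mono1 ordLeq_ordLess_trans by blast

lemma less_continuum_Un: "less_continuum X \<Longrightarrow> less_continuum Y \<Longrightarrow> less_continuum (X \<union> Y)"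
  unfolding less_continuum_def using card_of_Un_ordLess_infinite infinite_UNIV_char_0 by blast

lemma finite_less_continuum: "finite X \<Longrightarrow> less_continuum X"
  unfolding less_continuum_def
  by (rule finite_ordLess_infinite[OF card_of_Well_order card_of_Well_order])
     (auto simp: Field_card_of infinite_UNIV_char_0)

lemma less_continuum_insert: "less_continuum X \<Longrightarrow> less_continuum (insert a X)"
  using less_continuum_Un[of "{a}" X] finite_less_continuum by auto

lemma less_continuum_image: "less_continuum X \<Longrightarrow> less_continuum (f ` X)"
  unfolding less_continuum_def using card_of_image ordLeq_ordLess_trans by blast

lemma less_continuum_inj_on:
  assumes "inj_on f X" "less_continuum (f ` X)" shows "less_continuum X"
proof -
  have "|X| \<le>o |f ` X|" using assms(1) by (intro card_of_ordLeq[THEN iffD1]) blast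
  then show ?thesis using assms(2) unfolding less_continuum_def by (rule ordLeq_ordLess_trans)
qed

lemma less_continuum_vimage: "inj f \<Longrightarrow> less_continuum S \<Longrightarrow> less_continuum (f -` S)"
  by (metis less_continuum_inj_on less_continuum_subset image_vimage_subset inj_on_subset top_greatest)

lemma less_continuum_UN_finite:
  assumes "less_continuum I" "\<And>i. i \<in> I \<Longrightarrow> finite (A i)"
  shows "less_continuum (\<Union>i\<in>I. A i)"
proof (cases "finite I")
  case True
  then show ?thesis using assms by (intro finite_less_continuum) auto
next
  case False
  have "|\<Union>i\<in>I. A i| \<le>o |I|"
    using assms(2) False
    by (intro card_of_UNION_ordLeq_infinite[OF False] ordIso_imp_ordLeq card_of_refl ballI
        ordLess_imp_ordLeq finite_ordLess_infinite[OF card_of_Well_order card_of_Well_order])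
       (auto simp: Field_card_of)
  then show ?thesis using assms(1) unfolding less_continuum_def using ordLeq_ordLess_trans by blast
qed

lemma less_continuum_Times:
  assumes "less_continuum X" shows "less_continuum (X \<times> X)"
proof (cases "finite X")
  case False
  show ?thesis
    using ordIso_ordLess_trans[OF card_of_Times_same_infinite[OF False]] assms
    unfolding less_continuum_def .
qed (simp add: finite_less_continuum)

lemma interval_not_less_continuum:
  fixes a b :: real
  assumes "a < b" "{a<..<b} \<subseteq> X"
  shows "\<not> less_continuum X"
proof
  assume "less_continuum X"
  then have "less_continuum {a<..<b}" using assms(2) by (rule less_continuum_subset[rotated])
  moreover have "{a<..<b} \<approx> (UNIV :: real set)" using assms(1) by (intro eqpoll_real_subset) auto
  ultimately show False
    unfolding less_continuum_def eqpoll_iff_card_of_ordIso using not_ordLess_ordIso by blast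
qed

lemma not_less_continuum_diff: "\<not> less_continuum C \<Longrightarrow> less_continuum T \<Longrightarrow> C - T \<noteq> {}"
  using less_continuum_subset[of C T] by auto

lemma ex_real_enumeration: "|X| \<le>o |UNIV :: real set| \<Longrightarrow> \<exists>f :: real \<Rightarrow> 'a. X \<subseteq> range f"
  by (cases "X = {}") (auto simp: card_of_ordLeq2[symmetric])

lemma card_of_UNIV_real2: "|UNIV :: (real^2) set| \<le>o |UNIV :: real set|"
proof -
  have "inj (\<lambda>x :: real^2. (x $ 1, x $ 2))" by (rule injI) (simp add: vec_eq_iff forall_2)
  then have "|UNIV :: (real^2) set| \<le>o |(UNIV :: real set) \<times> (UNIV :: real set)|"
    by (intro card_of_ordLeq[THEN iffD1]) auto
  then show ?thesis
    using card_of_Times_same_infinite[OF infinite_UNIV_char_0[where 'a = real]] by (rule ordLeq_ordIso_trans)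
qed

lemma card_of_range_nat_sets: "|range (f :: nat set \<Rightarrow> 'a)| \<le>o |UNIV :: real set|"
  using card_of_image[of f UNIV] nat_sets_eqpoll_reals
  unfolding eqpoll_iff_card_of_ordIso by (rule ordLeq_ordIso_trans)

lemma ex_nat_set_code_open: "\<exists>code :: nat set \<Rightarrow> 'a::second_countable_topology set. {S. open S} \<subseteq> range code"
proof -
  obtain \<B> :: "'a set set" where \<B>: "countable \<B>" "topological_basis \<B>"
    using ex_countable_basis by blast
  have "S \<in> range (\<lambda>N. \<Union>(from_nat_into \<B> ` N))" if "open S" for S
  proof -
    obtain \<B>' where "\<B>' \<subseteq> \<B>" "S = \<Union>\<B>'" using \<B>(2) \<open>open S\<close> unfolding topological_basis_def by blast
    then have "S = \<Union>(from_nat_into \<B> ` (from_nat_into \<B> -` \<B>'))"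
      using \<B>(1) by (cases "\<B> = {}") (auto simp: image_vimage_eq range_from_nat_into)
    then show ?thesis by blast
  qed
  then show ?thesis by blast
qed

lemma card_of_open_sets: "|{S :: 'a::second_countable_topology set. open S}| \<le>o |UNIV :: real set|"
proof -
  obtain code :: "nat set \<Rightarrow> 'a set" where "{S. open S} \<subseteq> range code"
    using ex_nat_set_code_open by (elim exE)
  then show ?thesis by (rule ordLeq_transitive[OF card_of_mono1 card_of_range_nat_sets])
qed

lemma card_of_closed_sets: "|{S :: 'a::second_countable_topology set. closed S}| \<le>o |UNIV :: real set|"
proof -
  have "{S :: 'a set. closed S} \<subseteq> uminus ` {S. open S}"
  proof
    fix S :: "'a set" assume "S \<in> {S. closed S}"
    then have "S = - (- S)" "- S \<in> {S. open S}" by (simp_all add: open_Compl)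
    then show "S \<in> uminus ` {S. open S}" by (rule image_eqI)
  qed
  then show ?thesis
    by (rule ordLeq_transitive[OF card_of_mono1 ordLeq_transitive[OF card_of_image card_of_open_sets]])
qed

lemma card_of_countable_Inter_open:
  "|{\<Inter>(range F) | F :: nat \<Rightarrow> 'a::second_countable_topology set. \<forall>n. open (F n)}| \<le>o |UNIV :: real set|"
proof -
  obtain code :: "nat set \<Rightarrow> 'a set" where code: "{S. open S} \<subseteq> range code"
    using ex_nat_set_code_open by (elim exE)
  define decode where "decode N n = {k. prod_encode (n, k) \<in> N}" for N n
  have "\<Inter>(range F) \<in> range (\<lambda>N. \<Inter>n. code (decode N n))"
    if "\<forall>n. open (F n)" for F :: "nat \<Rightarrow> 'a set"
  proof -
    define G where "G n = inv code (F n)" for n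
    have "code (G n) = F n" for n
      unfolding G_def using that code by (intro f_inv_into_f) blast
    moreover have "decode {prod_encode (n, k) | n k. k \<in> G n} = G"
      by (auto simp: decode_def prod_encode_eq)
    ultimately have "\<Inter>(range F) = (\<Inter>n. code (decode {prod_encode (n, k) | n k. k \<in> G n} n))"
      by simp
    then show ?thesis by (rule range_eqI)
  qed
  then have "{\<Inter>(range F) | F :: nat \<Rightarrow> 'a set. \<forall>n. open (F n)} \<subseteq> range (\<lambda>N. \<Inter>n. code (decode N n))"
    by blast
  then show ?thesis by (rule ordLeq_transitive[OF card_of_mono1 card_of_range_nat_sets])
qed

section \<open>Lines in the plane\<close>

definition plane_lines :: "(real^2) set set" where
  "plane_lines = {{x. v \<bullet> x = k} | v k. v \<noteq> 0}"

lemma hyperplane_in_plane_lines: "v \<noteq> 0 \<Longrightarrow> {x. v \<bullet> x = k} \<in> plane_lines"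
  unfolding plane_lines_def by auto

lemma plane_line_eq_affine_hull:
  assumes "l \<in> plane_lines" "p \<in> l" "q \<in> l" "p \<noteq> q"
  shows "l = affine hull {p, q}"
proof -
  obtain v k where l: "l = {x. v \<bullet> x = k}" "v \<noteq> 0" using assms(1) unfolding plane_lines_def by blast
  have "affine hull {p, q} \<subseteq> l"
    using assms(2,3) unfolding l(1) by (intro hull_minimal affine_hyperplane) auto
  moreover have "aff_dim (affine hull {p, q}) = aff_dim l" using l assms(4) by simp
  ultimately show ?thesis
    by (intro affine_dim_equal[symmetric]) (auto simp: l(1) affine_hyperplane)
qed

lemma plane_lines_eqI:
  "l \<in> plane_lines \<Longrightarrow> l' \<in> plane_lines \<Longrightarrow> {p, q} \<subseteq> l \<inter> l' \<Longrightarrow> p \<noteq> q \<Longrightarrow> l = l'"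
  using plane_line_eq_affine_hull[of l p q] plane_line_eq_affine_hull[of l' p q] by simp

lemma less_continuum_line_Int_Union:
  assumes "l \<in> plane_lines" "L \<subseteq> plane_lines" "l \<notin> L" "less_continuum L"
  shows "less_continuum (l \<inter> \<Union>L)"
proof -
  have "finite (l \<inter> l')" if "l' \<in> L" for l'
  proof (rule finite_subset)
    define p0 where "p0 = (SOME p. p \<in> l \<inter> l')"
    show "l \<inter> l' \<subseteq> {p0}"
    proof
      fix p assume p: "p \<in> l \<inter> l'"
      then have "p0 \<in> l \<inter> l'" unfolding p0_def by (rule someI)
      moreover have "l \<noteq> l'" using assms(3) that by blast
      ultimately have "p = p0"
        using plane_lines_eqI[OF assms(1) subsetD[OF assms(2) that], of p p0] p by blast
      then show "p \<in> {p0}" by simp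
    qed
  qed simp
  moreover have "l \<inter> \<Union>L = (\<Union>l'\<in>L. l \<inter> l')" by blast
  ultimately show ?thesis using less_continuum_UN_finite[OF assms(4), of "\<lambda>l'. l \<inter> l'"] by simp
qed

lemma ex_point_on_line_avoiding:
  assumes "inj f" "range f \<subseteq> l" "l \<in> plane_lines" "l \<notin> L" "L \<subseteq> plane_lines"
    and "less_continuum L" "less_continuum P" "\<not> less_continuum S"
  shows "\<exists>r\<in>S. f r \<notin> P \<and> f r \<notin> \<Union>L"
proof -
  have "less_continuum (f -` (P \<union> (l \<inter> \<Union>L)))"
    using assms by (intro less_continuum_vimage less_continuum_Un less_continuum_line_Int_Union)
  then obtain r where "r \<in> S" "f r \<notin> P \<union> (l \<inter> \<Union>L)"
    using not_less_continuum_diff[OF assms(8)] by blast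
  then show ?thesis using assms(2) by blast
qed

definition no_small_cover :: "(real^2) set \<Rightarrow> bool" where
  "no_small_cover W \<longleftrightarrow>
     (\<forall>P L. less_continuum P \<longrightarrow> less_continuum L \<longrightarrow> L \<subseteq> plane_lines \<longrightarrow> \<not> W \<subseteq> P \<union> \<Union>L)"

lemma no_small_coverD:
  "no_small_cover W \<Longrightarrow> less_continuum P \<Longrightarrow> less_continuum L \<Longrightarrow> L \<subseteq> plane_lines \<Longrightarrow>
    \<exists>x\<in>W. x \<notin> P \<and> x \<notin> \<Union>L"
  unfolding no_small_cover_def by blast

lemma vector_2_eq_axis: "(vector [a, b] :: real^2) = a *\<^sub>R axis 1 1 + b *\<^sub>R axis 2 1"
  by (simp add: vec_eq_iff forall_2 axis_def)

lemma continuous_on_vector_2: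
  "continuous_on UNIV (\<lambda>b. vector [a, b] :: real^2)" "continuous_on UNIV (\<lambda>a. vector [a, b] :: real^2)"
  unfolding vector_2_eq_axis by (intro continuous_intros)+

lemma inj_vector_2: "inj (\<lambda>b. vector [a, b] :: real^2)"
  by (auto intro!: injI simp: vec_eq_iff forall_2)

lemma vertical_line_in_plane_lines: "{x :: real^2. axis 1 1 \<bullet> x = a} \<in> plane_lines"
  by (rule hyperplane_in_plane_lines) (simp add: axis_eq_0_iff)

lemma no_small_cover_if_sections:
  fixes W :: "(real^2) set"
  assumes X: "\<not> less_continuum X" and sections: "\<And>a. a \<in> X \<Longrightarrow> \<not> less_continuum {b. vector [a, b] \<in> W}"
  shows "no_small_cover W"
  unfolding no_small_cover_def
proof (intro allI impI)
  fix P :: "(real^2) set" and L assume small: "less_continuum P" "less_continuum L" "L \<subseteq> plane_lines"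
  define vert where "vert a = {x :: real^2. axis 1 1 \<bullet> x = a}" for a
  have vector_vert: "vector [a, b] \<in> vert a" for a b unfolding vert_def by (simp add: inner_axis')
  have "inj vert"
  proof (rule injI)
    fix a a' assume "vert a = vert a'"
    then have "vector [a, 0] \<in> vert a'" using vector_vert[of a 0] by simp
    then show "a = a'" unfolding vert_def by (simp add: inner_axis')
  qed
  then obtain a where a: "a \<in> X" "vert a \<notin> L"
    using not_less_continuum_diff[OF X less_continuum_vimage[OF _ small(2)]] by blast
  have "\<exists>b\<in>{b. vector [a, b] \<in> W}. vector [a, b] \<notin> P \<and> vector [a, b] \<notin> \<Union>L"
    using inj_vector_2 vector_vert vertical_line_in_plane_lines a(2) small sections[OF a(1)]
    unfolding vert_def by (intro ex_point_on_line_avoiding) auto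
  then show "\<not> W \<subseteq> P \<union> \<Union>L" by blast
qed

lemma ex_disc_point_on_chord:
  fixes u :: "real^2"
  assumes u: "norm u = 1" and h: "\<bar>h\<bar> < 1" and line: "{x. u \<bullet> x = h} \<notin> L"
    and P: "less_continuum P" and L: "less_continuum L" "L \<subseteq> plane_lines"
  shows "\<exists>c\<in>cball 0 1. u \<bullet> c = h \<and> c \<notin> P \<and> c \<notin> \<Union>L"
proof -
  have uu: "u \<bullet> u = 1" using u by (simp add: dot_square_norm)
  define w :: "real^2" where "w = vector [- u$2, u$1]"
  have uw: "u \<bullet> w = 0" unfolding w_def by (simp add: inner_vec_def sum_2)
  have "w \<bullet> w = u \<bullet> u" unfolding w_def by (simp add: inner_vec_def sum_2)
  then have w: "norm w = 1" using uu by (simp add: norm_eq_sqrt_inner)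
  define q where "q r = h *\<^sub>R u + r *\<^sub>R w" for r
  have "inj q"
  proof (rule injI)
    fix r r' assume "q r = q r'"
    then have "(r - r') *\<^sub>R w = 0" unfolding q_def by (simp add: algebra_simps)
    then show "r = r'" using w by auto
  qed
  moreover have uq: "range q \<subseteq> {x. u \<bullet> x = h}"
    unfolding q_def using uu uw by (auto simp: inner_add_right)
  moreover have "{x. u \<bullet> x = h} \<in> plane_lines" using u by (intro hyperplane_in_plane_lines) auto
  moreover have "\<not> less_continuum {- (1 - \<bar>h\<bar>)<..<1 - \<bar>h\<bar>}"
    using h by (intro interval_not_less_continuum[of "- (1 - \<bar>h\<bar>)" "1 - \<bar>h\<bar>"]) auto
  ultimately have "\<exists>r\<in>{- (1 - \<bar>h\<bar>)<..<1 - \<bar>h\<bar>}. q r \<notin> P \<and> q r \<notin> \<Union>L"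
    using line L P by (intro ex_point_on_line_avoiding)
  then obtain r where r: "\<bar>r\<bar> < 1 - \<bar>h\<bar>" "q r \<notin> P" "q r \<notin> \<Union>L"
    by (metis abs_less_iff greaterThanLessThan_iff minus_less_iff)
  have "norm (q r) \<le> \<bar>h\<bar> + \<bar>r\<bar>"
    unfolding q_def using norm_triangle_ineq[of "h *\<^sub>R u" "r *\<^sub>R w"] u w by simp
  then have "q r \<in> cball 0 1" using r(1) by simp
  moreover have "u \<bullet> q r = h" using uq by blast
  ultimately show ?thesis using r by blast
qed

lemma ex_disc_point_in_strip:
  fixes u :: "real^2"
  assumes u: "norm u = 1" and C: "\<not> less_continuum C" "C \<subseteq> {t. \<bar>t + s\<bar> < 1}"
    and P: "less_continuum P" and L: "less_continuum L" "L \<subseteq> plane_lines"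
  shows "\<exists>c\<in>cball 0 1. u \<bullet> c - s \<in> C \<and> c \<notin> P \<and> c \<notin> \<Union>L"
proof -
  have uu: "u \<bullet> u = 1" using u by (simp add: dot_square_norm)
  have "inj (\<lambda>t. {x. u \<bullet> x = t + s})"
  proof (rule injI)
    fix t t' assume eq: "{x. u \<bullet> x = t + s} = {x. u \<bullet> x = t' + s}"
    have "(t + s) *\<^sub>R u \<in> {x. u \<bullet> x = t + s}" using uu by simp
    then have "(t + s) *\<^sub>R u \<in> {x. u \<bullet> x = t' + s}" by (simp only: eq)
    then show "t = t'" using uu by simp
  qed
  then obtain t where t: "t \<in> C" "{x. u \<bullet> x = t + s} \<notin> L"
    using not_less_continuum_diff[OF C(1) less_continuum_vimage[OF _ L(1)]] by blast
  moreover have "\<bar>t + s\<bar> < 1" using t(1) C(2) by auto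
  ultimately obtain c where c: "c \<in> cball 0 1" "u \<bullet> c = t + s" "c \<notin> P" "c \<notin> \<Union>L"
    using ex_disc_point_on_chord[OF u _ _ P L] by blast
  have "u \<bullet> c - s \<in> C" using c(2) t(1) by simp
  with c(1,3,4) show ?thesis by blast
qed

lemma ex_line_task_witnesses:
  fixes u :: "real^2"
  assumes u: "norm u = 1" and C: "\<not> less_continuum C" "C \<subseteq> {t. \<bar>t + s\<bar> < 1}"
    and small: "less_continuum I" "less_continuum Q" "less_continuum L" "L \<subseteq> plane_lines"
  obtains c t where "c \<in> cball 0 1" "u \<bullet> c - s \<in> C" "t \<in> C" "c \<notin> Q"
    "c \<notin> \<Union>(insert {y. u \<bullet> y = t + s} L)" "{y. u \<bullet> y = t + s} \<inter> I = {}"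
proof -
  obtain t where t: "t \<in> C" "t \<notin> (\<lambda>y. u \<bullet> y - s) ` I"
    using not_less_continuum_diff[OF C(1) less_continuum_image[OF small(1)]] by blast
  have "{y. u \<bullet> y = t + s} \<in> plane_lines" using u by (intro hyperplane_in_plane_lines) auto
  with u C small obtain c where c: "c \<in> cball 0 1" "u \<bullet> c - s \<in> C" "c \<notin> Q"
      "c \<notin> \<Union>(insert {y. u \<bullet> y = t + s} L)"
    by (metis ex_disc_point_in_strip less_continuum_insert insert_subset)
  moreover have "{y. u \<bullet> y = t + s} \<inter> I = {}" using t(2) by force
  ultimately show ?thesis using that[OF c(1,2) t(1) c(3,4)] by blast
qed

section \<open>The transfinite construction\<close>

definition splits :: "'a set \<Rightarrow> 'a set \<Rightarrow> bool" where
  "splits S B \<longleftrightarrow> S \<inter> B \<noteq> {} \<and> B - S \<noteq> {}"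

(* A stage (I, Q, L) collects the points put into A, the points kept out of A and the lines
   kept disjoint from A.  A task (W, u, s, C) asks A to split the plane kernel W, and its
   projection x \<mapsto> u \<bullet> x - s to split the line kernel C. *)
type_synonym stage = "(real^2) set \<times> (real^2) set \<times> (real^2) set set"

type_synonym task = "(real^2) set \<times> (real^2) \<times> real \<times> real set"

fun stage_step :: "((real^2) set \<Rightarrow> bool) \<Rightarrow> (real set \<Rightarrow> bool) \<Rightarrow> task \<Rightarrow> stage \<Rightarrow> stage \<Rightarrow> bool"
  where "stage_step plane_kernel line_kernel (W, u, s, C) (I, Q, L) (I', Q', L') \<longleftrightarrow>
    finite I' \<and> finite Q' \<and> finite L' \<and> L' \<subseteq> plane_lines \<and> I' \<subseteq> cball 0 1 \<and>
    I' \<inter> (Q \<union> Q') = {} \<and> I' \<inter> \<Union>(L \<union> L') = {} \<and> (Q' \<union> \<Union>L') \<inter> I = {} \<and>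
    (plane_kernel W \<and> W \<subseteq> cball 0 1 \<longrightarrow> I' \<inter> W \<noteq> {} \<and> Q' \<inter> W \<noteq> {}) \<and>
    (norm u = 1 \<and> line_kernel C \<and> C \<subseteq> {t. \<bar>t + s\<bar> < 1} \<longrightarrow>
       (\<exists>c\<in>I'. u \<bullet> c - s \<in> C) \<and> (\<exists>t\<in>C. {y. u \<bullet> y = t + s} \<in> L'))"

lemma stage_step_bounds:
  "stage_step plane_kernel line_kernel task H (I', Q', L') \<Longrightarrow>
    finite I' \<and> finite Q' \<and> finite L' \<and> L' \<subseteq> plane_lines \<and> I' \<subseteq> cball 0 1"
  by (cases task; cases H) simp

lemma stage_step_disjoint:
  "stage_step plane_kernel line_kernel task (I, Q, L) (I', Q', L') \<Longrightarrow> I' \<inter> (Q \<union> Q' \<union> \<Union>(L \<union> L')) = {} \<and> (Q' \<union> \<Union>L') \<inter> I = {}"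
  by (cases task) auto

lemma stage_step_tasks:
  "stage_step plane_kernel line_kernel (W, u, s, C) H (I', Q', L') \<Longrightarrow>
    (plane_kernel W \<and> W \<subseteq> cball 0 1 \<longrightarrow> I' \<inter> W \<noteq> {} \<and> Q' \<inter> W \<noteq> {}) \<and>
    (norm u = 1 \<and> line_kernel C \<and> C \<subseteq> {t. \<bar>t + s\<bar> < 1} \<longrightarrow>
       (\<exists>c\<in>I'. u \<bullet> c - s \<in> C) \<and> (\<exists>t\<in>C. {y. u \<bullet> y = t + s} \<in> L'))"
  by (cases H) simp

lemma ex_stage_step:
  assumes uncovered: "\<And>W. plane_kernel W \<Longrightarrow> no_small_cover W"
    and line_kernel_large: "\<And>C. line_kernel C \<Longrightarrow> \<not> less_continuum C"
    and small: "less_continuum I" "less_continuum Q" "less_continuum L" "L \<subseteq> plane_lines"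
  shows "\<exists>new. stage_step plane_kernel line_kernel task (I, Q, L) new"
proof -
  obtain W u s C where task: "task = (W, u, s, C)" by (cases task) auto
  obtain I1 Q1 where plane: "finite I1" "finite Q1" "I1 \<subseteq> cball 0 1" "I1 \<inter> (Q \<union> Q1) = {}"
    "I1 \<inter> \<Union>L = {}" "Q1 \<inter> I = {}" "plane_kernel W \<and> W \<subseteq> cball 0 1 \<longrightarrow> I1 \<inter> W \<noteq> {} \<and> Q1 \<inter> W \<noteq> {}"
  proof (cases "plane_kernel W \<and> W \<subseteq> cball 0 1")
    case True
    then have W: "no_small_cover W" using uncovered by blast
    obtain a where a: "a \<in> W" "a \<notin> Q" "a \<notin> \<Union>L" using no_small_coverD[OF W small(2-4)] by blast
    have "less_continuum (insert a I)" "less_continuum {}"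
      using small(1) by (simp_all add: less_continuum_insert finite_less_continuum)
    then obtain b where b: "b \<in> W" "b \<notin> insert a I" using no_small_coverD[OF W] by blast
    show ?thesis by (rule that[of "{a}" "{b}"]) (use a b True in auto)
  next
    case False
    show ?thesis by (rule that[of "{}" "{}"]) (use False in auto)
  qed
  show ?thesis
  proof (cases "norm u = 1 \<and> line_kernel C \<and> C \<subseteq> {t. \<bar>t + s\<bar> < 1}")
    case True
    have "less_continuum (I \<union> I1)" "less_continuum (Q \<union> Q1)"
      using small plane by (simp_all add: less_continuum_Un finite_less_continuum)
    moreover have "norm u = 1" "\<not> less_continuum C" "C \<subseteq> {t. \<bar>t + s\<bar> < 1}"
      using True line_kernel_large[of C] by auto
    ultimately obtain c t where "c \<in> cball 0 1" "u \<bullet> c - s \<in> C" "t \<in> C" "c \<notin> Q \<union> Q1"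
      "c \<notin> \<Union>(insert {y. u \<bullet> y = t + s} L)" "{y. u \<bullet> y = t + s} \<inter> (I \<union> I1) = {}"
      using ex_line_task_witnesses[of u C s "I \<union> I1" "Q \<union> Q1" L] small(3,4) by blast
    then have "stage_step plane_kernel line_kernel task (I, Q, L) (insert c I1, Q1, {{y. u \<bullet> y = t + s}})"
      using plane True by (auto simp: task intro: hyperplane_in_plane_lines)
    then show ?thesis by blast
  next
    case False
    then have "stage_step plane_kernel line_kernel task (I, Q, L) (I1, Q1, {})" using plane by (auto simp: task)
    then show ?thesis by blast
  qed
qed

definition stage_history :: "(real \<Rightarrow> stage) \<Rightarrow> real \<Rightarrow> stage" where
  "stage_history F x = (let Y = underS |UNIV :: real set| x in
     (\<Union>y\<in>Y. fst (F y), \<Union>y\<in>Y. fst (snd (F y)), \<Union>y\<in>Y. snd (snd (F y))))"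

lemma less_continuum_underS: "less_continuum (underS |UNIV :: real set| x)"
  using card_of_underS[OF card_of_Card_order, of x UNIV] unfolding less_continuum_def
  by (simp add: Field_card_of)

lemma ex_stage_sequence:
  assumes uncovered: "\<And>W. plane_kernel W \<Longrightarrow> no_small_cover W"
    and line_kernel_large: "\<And>C. line_kernel C \<Longrightarrow> \<not> less_continuum C"
  shows "\<exists>F. \<forall>x. stage_step plane_kernel line_kernel (task x) (stage_history F x) (F x)"
proof -
  let ?r = "|UNIV :: real set|"
  have wo: "wo_rel ?r" unfolding wo_rel_def by (rule card_of_Well_order)
  define H where "H F x = (SOME new. stage_step plane_kernel line_kernel (task x) (stage_history F x) new)" for F x
  have "wo_rel.adm_wo ?r H"
    unfolding wo_rel.adm_wo_def[OF wo]
  proof (intro allI impI)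
    fix f g :: "real \<Rightarrow> stage" and x
    assume "\<forall>y\<in>underS ?r x. f y = g y"
    then have "stage_history f x = stage_history g x"
      unfolding stage_history_def Let_def by (simp cong: SUP_cong_simp)
    then show "H f x = H g x" unfolding H_def by simp
  qed
  then have F: "wo_rel.worec ?r H x = H (wo_rel.worec ?r H) x" for x
    using wo_rel.worec_fixpoint[OF wo] by metis
  define F where "F = wo_rel.worec ?r H"
  have "stage_step plane_kernel line_kernel (task x) (stage_history F x) (F x)" for x
  proof (induction x rule: wo_rel.well_order_induct[OF wo])
    case (1 x)
    then have step: "stage_step plane_kernel line_kernel (task y) (stage_history F y) (F y)" if "y \<in> underS ?r x" for y
      using that unfolding underS_def by blast
    have "finite (fst (F y))" "finite (fst (snd (F y)))" "finite (snd (snd (F y)))"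
      "snd (snd (F y)) \<subseteq> plane_lines" if "y \<in> underS ?r x" for y
      using stage_step_bounds[of plane_kernel line_kernel "task y" "stage_history F y" "fst (F y)" "fst (snd (F y))"
          "snd (snd (F y))"] step[OF that] by simp_all
    then have "\<exists>new. stage_step plane_kernel line_kernel (task x) (stage_history F x) new"
      unfolding stage_history_def Let_def
      by (intro ex_stage_step[OF uncovered line_kernel_large] less_continuum_UN_finite[OF less_continuum_underS]) blast+
    then have "stage_step plane_kernel line_kernel (task x) (stage_history F x) (H F x)" unfolding H_def by (rule someI_ex)
    then show ?case using F[of x] unfolding F_def[symmetric] by simp
  qed
  then show ?thesis by blast
qed

lemma stage_sequence_disjoint:
  assumes F: "\<And>x. stage_step plane_kernel line_kernel (task x) (stage_history F x) (F x)"
  shows "fst (F x) \<inter> (fst (snd (F y)) \<union> \<Union>(snd (snd (F y)))) = {}"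
proof -
  let ?r = "|UNIV :: real set|"
  define hI where "hI z = (\<Union>y\<in>underS ?r z. fst (F y))" for z
  define hQ where "hQ z = (\<Union>y\<in>underS ?r z. fst (snd (F y)))" for z
  define hL where "hL z = (\<Union>y\<in>underS ?r z. snd (snd (F y)))" for z
  have disj: "fst (F z) \<inter> (hQ z \<union> fst (snd (F z)) \<union> \<Union>(hL z \<union> snd (snd (F z)))) = {} \<and>
      (fst (snd (F z)) \<union> \<Union>(snd (snd (F z)))) \<inter> hI z = {}" for z
  proof (rule stage_step_disjoint)
    show "stage_step plane_kernel line_kernel (task z) (hI z, hQ z, hL z) (fst (F z), fst (snd (F z)), snd (snd (F z)))"
      using F[of z] by (simp only: stage_history_def Let_def hI_def hQ_def hL_def prod.collapse)
  qed
  have "wo_rel ?r" unfolding wo_rel_def by (rule card_of_Well_order)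
  then have "\<forall>a\<in>Field ?r. \<forall>b\<in>Field ?r. (a, b) \<in> ?r \<or> (b, a) \<in> ?r" by (rule wo_rel.TOTALS)
  then have "(x, y) \<in> ?r \<or> (y, x) \<in> ?r" by (simp add: Field_card_of)
  then consider "x = y" | "y \<in> underS ?r x" | "x \<in> underS ?r y" unfolding underS_def by auto
  then show ?thesis
  proof cases
    case 1
    then show ?thesis using disj[of x] by blast
  next
    case 2
    then show ?thesis using disj[of x] unfolding hQ_def hL_def by blast
  next
    case 3
    then show ?thesis using disj[of y] unfolding hI_def by blast
  qed
qed

lemma stage_sequence_splits:
  assumes F: "\<And>x. stage_step plane_kernel line_kernel (task x) (stage_history F x) (F x)"
    and A: "A = (\<Union>x. fst (F x))" and task: "task x = (W, u, s, C)"
  shows "plane_kernel W \<Longrightarrow> W \<subseteq> cball 0 1 \<Longrightarrow> splits A W"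
    and "norm u = 1 \<Longrightarrow> line_kernel C \<Longrightarrow> C \<subseteq> {t. \<bar>t + s\<bar> < 1} \<Longrightarrow> splits ((\<lambda>x. u \<bullet> x - s) ` A) C"
proof -
  obtain I Q L where Fx: "F x = (I, Q, L)" by (metis prod.collapse)
  have step: "stage_step plane_kernel line_kernel (W, u, s, C) (stage_history F x) (I, Q, L)"
    using F[of x] unfolding task Fx .
  have "fst (F y) \<inter> (Q \<union> \<Union>L) = {}" for y using stage_sequence_disjoint[OF F, of y x] Fx by simp
  then have disj: "A \<inter> (Q \<union> \<Union>L) = {}" unfolding A by blast
  have "I = fst (F x)" using Fx by simp
  then have I: "I \<subseteq> A" unfolding A by blast
  show "splits A W" if W: "plane_kernel W" "W \<subseteq> cball 0 1"
  proof -
    have "I \<inter> W \<noteq> {}" "Q \<inter> W \<noteq> {}" using stage_step_tasks[OF step] W by blast+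
    then show ?thesis using disj I unfolding splits_def by blast
  qed
  show "splits ((\<lambda>x. u \<bullet> x - s) ` A) C" if C: "norm u = 1" "line_kernel C" "C \<subseteq> {t. \<bar>t + s\<bar> < 1}"
  proof -
    obtain c t where "c \<in> I" "u \<bullet> c - s \<in> C" "t \<in> C" "{y. u \<bullet> y = t + s} \<in> L"
      using stage_step_tasks[OF step] C by blast
    moreover from this have "t \<notin> (\<lambda>x. u \<bullet> x - s) ` A" using disj by force
    ultimately show ?thesis using I unfolding splits_def by blast
  qed
qed

lemma ex_task_enumerations:
  assumes "|Collect plane_kernel| \<le>o |UNIV :: real set|" "|Collect line_kernel| \<le>o |UNIV :: real set|"
  obtains fP :: "real \<Rightarrow> (real^2) set" and fL :: "real \<Rightarrow> (real^2) \<times> real \<times> real set"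
  where "Collect plane_kernel \<subseteq> range fP" "UNIV \<times> UNIV \<times> Collect line_kernel \<subseteq> range fL"
proof -
  let ?c = "|UNIV :: real set|"
  have c: "\<not> finite (Field ?c)" "Card_order ?c" "|UNIV :: real set| \<le>o ?c"
    by (simp add: Field_card_of infinite_UNIV_char_0, rule card_of_Card_order, rule card_of_mono1, simp)
  obtain fP :: "real \<Rightarrow> (real^2) set" where "Collect plane_kernel \<subseteq> range fP"
    using ex_real_enumeration[OF assms(1)] by blast
  moreover have "|(UNIV :: (real^2) set) \<times> (UNIV :: real set) \<times> Collect line_kernel| \<le>o ?c"
    by (intro card_of_Times_ordLeq_infinite_Field c assms card_of_UNIV_real2)
  then obtain fL :: "real \<Rightarrow> (real^2) \<times> real \<times> real set"
    where "UNIV \<times> UNIV \<times> Collect line_kernel \<subseteq> range fL"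
    by (blast dest: ex_real_enumeration)
  ultimately show ?thesis by (rule that)
qed

lemma ex_set_splitting_kernels:
  assumes uncovered: "\<And>W. plane_kernel W \<Longrightarrow> no_small_cover W"
    and line_kernel_large: "\<And>C. line_kernel C \<Longrightarrow> \<not> less_continuum C"
    and card: "|Collect plane_kernel| \<le>o |UNIV :: real set|" "|Collect line_kernel| \<le>o |UNIV :: real set|"
  shows "\<exists>A \<subseteq> cball 0 1. (\<forall>W. plane_kernel W \<longrightarrow> W \<subseteq> cball 0 1 \<longrightarrow> splits A W) \<and>
    (\<forall>u s C. norm u = 1 \<longrightarrow> line_kernel C \<longrightarrow> C \<subseteq> {t. \<bar>t + s\<bar> < 1} \<longrightarrow> splits ((\<lambda>x. u \<bullet> x - s) ` A) C)"
proof -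
  obtain fP :: "real \<Rightarrow> (real^2) set" and fL :: "real \<Rightarrow> (real^2) \<times> real \<times> real set"
    where fP: "Collect plane_kernel \<subseteq> range fP" and fL: "UNIV \<times> UNIV \<times> Collect line_kernel \<subseteq> range fL"
    using ex_task_enumerations[OF card] .
  obtain F where F: "\<And>x. stage_step plane_kernel line_kernel (fP x, fL x) (stage_history F x) (F x)"
    using ex_stage_sequence[OF uncovered line_kernel_large, where task = "\<lambda>x. (fP x, fL x)"] by blast
  define A where "A = (\<Union>x. fst (F x))"
  have "A \<subseteq> cball 0 1"
  proof -
    have "fst (F x) \<subseteq> cball 0 1" for x
      using stage_step_bounds[of plane_kernel line_kernel "(fP x, fL x)" "stage_history F x" "fst (F x)" "fst (snd (F x))"
          "snd (snd (F x))"] F[of x] by simp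
    then show ?thesis unfolding A_def by blast
  qed
  moreover have "splits A W" if W: "plane_kernel W" "W \<subseteq> cball 0 1" for W
  proof -
    obtain x where x: "fP x = W" using subsetD[OF fP, of W] W(1) by auto
    obtain u s C where "fL x = (u, s, C)" using prod_cases3 by blast
    with x have "(fP x, fL x) = (W, u, s, C)" by simp
    from stage_sequence_splits(1)[OF F A_def this] W show ?thesis .
  qed
  moreover have "splits ((\<lambda>x. u \<bullet> x - s) ` A) C"
    if C: "norm u = 1" "line_kernel C" "C \<subseteq> {t. \<bar>t + s\<bar> < 1}" for u s C
  proof -
    obtain x where "fL x = (u, s, C)" using subsetD[OF fL, of "(u, s, C)"] C(2) by auto
    then have "(fP x, fL x) = (fP x, u, s, C)" by simp
    from stage_sequence_splits(2)[OF F A_def this] C show ?thesis .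
  qed
  ultimately show ?thesis by blast
qed

section \<open>Orthogonal projections onto lines\<close>

lemma splits_mono: "splits S T \<Longrightarrow> T \<subseteq> B \<Longrightarrow> splits S B"
  unfolding splits_def by blast

lemma splits_vimage: "B \<subseteq> range f \<Longrightarrow> splits (f -` S) (f -` B) \<Longrightarrow> splits S B"
  unfolding splits_def by blast

lemma completely_nonmeasurable_iff_splits:
  "completely_nonmeasurable J Bor Y S \<longleftrightarrow> (\<forall>B\<in>Bor. B \<subseteq> Y \<longrightarrow> \<not> J B \<longrightarrow> splits S B)"
  unfolding completely_nonmeasurable_def splits_def by blast

lemma orth_proj_eq_line_param: "orth_proj p u x = line_param p u (u \<bullet> x - u \<bullet> p)"
  unfolding orth_proj_def line_param_def by (metis inner_commute inner_diff_right)

lemma vimage_line_param_orth_proj: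
  assumes "u \<noteq> 0" shows "line_param p u -` (orth_proj p u ` A) = (\<lambda>x. u \<bullet> x - u \<bullet> p) ` A"
proof -
  have "inj (line_param p u)" using assms unfolding line_param_def by (intro injI) simp
  moreover have "orth_proj p u ` A = line_param p u ` ((\<lambda>x. u \<bullet> x - u \<bullet> p) ` A)"
    by (simp add: image_image orth_proj_eq_line_param)
  ultimately show ?thesis by (simp add: inj_vimage_image_eq)
qed

lemma vimage_line_param_orth_proj_sphere:
  assumes "norm u = 1"
  shows "line_param p u -` (orth_proj p u ` sphere 0 1) \<subseteq> {t. \<bar>t + u \<bullet> p\<bar> \<le> 1}"
proof -
  have "\<bar>u \<bullet> x\<bar> \<le> 1" if "x \<in> sphere 0 1" for x
    using Cauchy_Schwarz_ineq2[of u x] assms that by simp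
  moreover have "u \<noteq> 0" using assms by auto
  ultimately show ?thesis by (auto simp: vimage_line_param_orth_proj)
qed

(* The projected circle is the segment |t + s| <= 1; its two endpoints are dropped because the
   construction reaches C only through chords of the disc. *)
lemma splits_orth_proj_image:
  fixes J_line :: "real set \<Rightarrow> bool"
  assumes line_kernel_inside: "\<And>C. C \<in> sets borel \<Longrightarrow> bounded C \<Longrightarrow> \<not> J_line C \<Longrightarrow> \<exists>T\<subseteq>C. line_kernel T"
    and line_ideal: "\<And>C D. C \<subseteq> D \<Longrightarrow> J_line D \<Longrightarrow> J_line C" "\<And>C a. J_line C \<Longrightarrow> J_line (insert a C)"
    and u: "norm u = 1"
    and A: "\<And>s C. line_kernel C \<Longrightarrow> C \<subseteq> {t. \<bar>t + s\<bar> < 1} \<Longrightarrow> splits ((\<lambda>x. u \<bullet> x - s) ` A) C"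
    and B: "B \<in> line_borel p u" "B \<subseteq> orth_proj p u ` sphere 0 1" "\<not> J_line (line_param p u -` B)"
  shows "splits (orth_proj p u ` A) B"
proof -
  define s where "s = u \<bullet> p"
  define C where "C = line_param p u -` B \<inter> {t. \<bar>t + s\<bar> < 1}"
  have "line_param p u -` B \<subseteq> insert (- 1 - s) (insert (1 - s) C)"
  proof
    fix t assume t: "t \<in> line_param p u -` B"
    then have "\<bar>t + s\<bar> \<le> 1"
      using vimage_line_param_orth_proj_sphere[OF u, of p] B(2) unfolding s_def by blast
    then show "t \<in> insert (- 1 - s) (insert (1 - s) C)"
      using t unfolding C_def by (cases "\<bar>t + s\<bar> < 1") (auto simp: abs_if split: if_splits)
  qed
  then have "\<not> J_line C" using B(3) line_ideal by blast
  moreover have "{t. \<bar>t + s\<bar> < 1} = ball (- s) 1" by (auto simp: dist_real_def)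
  then have "C \<in> sets borel" "bounded C" using B(1) unfolding C_def line_borel_def by auto
  ultimately obtain T where T: "T \<subseteq> C" "line_kernel T" using line_kernel_inside by blast
  then have "splits ((\<lambda>x. u \<bullet> x - s) ` A) T" using A unfolding C_def by blast
  moreover have "line_param p u -` (orth_proj p u ` A) = (\<lambda>x. u \<bullet> x - s) ` A"
    using u unfolding s_def by (intro vimage_line_param_orth_proj) auto
  moreover have "T \<subseteq> line_param p u -` B" using T(1) unfolding C_def by blast
  ultimately have "splits (line_param p u -` (orth_proj p u ` A)) (line_param p u -` B)"
    by (simp add: splits_mono)
  then show ?thesis using B(1) unfolding line_borel_def line_def by (blast intro: splits_vimage)
qed

lemma ex_completely_nonmeasurable_disc_projections:
  fixes J_plane :: "(real^2) set \<Rightarrow> bool" and J_line :: "real set \<Rightarrow> bool"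
  assumes plane_kernel_inside: "\<And>B. B \<in> sets borel \<Longrightarrow> B \<subseteq> cball 0 1 \<Longrightarrow> \<not> J_plane B \<Longrightarrow> \<exists>W\<subseteq>B. plane_kernel W"
    and line_kernel_inside: "\<And>C. C \<in> sets borel \<Longrightarrow> bounded C \<Longrightarrow> \<not> J_line C \<Longrightarrow> \<exists>T\<subseteq>C. line_kernel T"
    and line_ideal: "\<And>C D. C \<subseteq> D \<Longrightarrow> J_line D \<Longrightarrow> J_line C" "\<And>C a. J_line C \<Longrightarrow> J_line (insert a C)"
    and uncovered: "\<And>W. plane_kernel W \<Longrightarrow> no_small_cover W"
    and line_kernel_large: "\<And>C. line_kernel C \<Longrightarrow> \<not> less_continuum C"
    and card: "|Collect plane_kernel| \<le>o |UNIV :: real set|" "|Collect line_kernel| \<le>o |UNIV :: real set|"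
  shows "\<exists>A \<subseteq> cball 0 1. completely_nonmeasurable J_plane (sets borel) (cball 0 1) A \<and>
    (\<forall>p u. norm u = 1 \<longrightarrow> completely_nonmeasurable (\<lambda>B. J_line (line_param p u -` B)) (line_borel p u)
        (orth_proj p u ` sphere 0 1) (orth_proj p u ` A))"
proof -
  obtain A where A: "A \<subseteq> cball 0 1" "\<And>W. plane_kernel W \<Longrightarrow> W \<subseteq> cball 0 1 \<Longrightarrow> splits A W"
    "\<And>u s C. norm u = 1 \<Longrightarrow> line_kernel C \<Longrightarrow> C \<subseteq> {t. \<bar>t + s\<bar> < 1} \<Longrightarrow> splits ((\<lambda>x. u \<bullet> x - s) ` A) C"
    using ex_set_splitting_kernels[OF uncovered line_kernel_large card] by blast
  have "splits A B" if "B \<in> sets borel" "B \<subseteq> cball 0 1" "\<not> J_plane B" for B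
    using plane_kernel_inside[OF that] A(2) that(2) by (meson splits_mono order_trans)
  moreover have "splits (orth_proj p u ` A) B"
    if "norm u = 1" "B \<in> line_borel p u" "B \<subseteq> orth_proj p u ` sphere 0 1"
      "\<not> J_line (line_param p u -` B)" for p u B
    using splits_orth_proj_image[where J_line = J_line and line_kernel = line_kernel,
        OF line_kernel_inside line_ideal that(1) A(3)[OF that(1)] that(2-4)] .
  ultimately show ?thesis using A(1) unfolding completely_nonmeasurable_iff_splits by blast
qed

section \<open>Lebesgue null sets\<close>

lemma lmeasurable_inner_closed_non_null:
  fixes S :: "'a::euclidean_space set"
  assumes S: "S \<in> lmeasurable" "S \<notin> null_sets lebesgue"
  obtains T where "closed T" "T \<subseteq> S" "T \<notin> null_sets lebesgue"
proof -
  define \<mu> where "\<mu> = measure lebesgue S"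
  have S\<mu>: "emeasure lebesgue S = ennreal \<mu>" unfolding \<mu>_def using S(1) by (rule emeasure_eq_measure2)
  have "\<mu> \<noteq> 0"
  proof
    assume "\<mu> = 0"
    then have "S \<in> null_sets lebesgue" using S\<mu> fmeasurableD[OF S(1)] by (simp add: null_setsI)
    then show False using S(2) by simp
  qed
  then have "\<mu> > 0" unfolding \<mu>_def by (simp add: zero_less_measure_iff)
  then obtain T where T: "closed T" "T \<subseteq> S" "S - T \<in> lmeasurable" "emeasure lebesgue (S - T) < ennreal \<mu>"
    using sets_lebesgue_inner_closed[OF fmeasurableD[OF S(1)]] by metis
  have "T \<notin> null_sets lebesgue"
  proof
    assume null: "T \<in> null_sets lebesgue"
    have "S - T \<in> sets lebesgue"
      using fmeasurableD[OF S(1)] borel_closed[OF T(1)] by (intro sets.Diff) auto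
    then have "emeasure lebesgue ((S - T) \<union> T) = emeasure lebesgue (S - T)"
      using null by (rule emeasure_Un_null_set)
    moreover have "(S - T) \<union> T = S" using T(2) by blast
    ultimately show False using T(4) S\<mu> by simp
  qed
  with T(1,2) show ?thesis by (rule that)
qed

lemma lebesgue_inner_compact_non_null:
  fixes S :: "'a::euclidean_space set"
  assumes S: "S \<in> sets lebesgue" "S \<notin> null_sets lebesgue"
  obtains K where "compact K" "K \<subseteq> S" "K \<notin> null_sets lebesgue"
proof -
  have "\<exists>n. S \<inter> cball 0 (real n) \<notin> null_sets lebesgue"
  proof (rule ccontr)
    assume "\<nexists>n. S \<inter> cball 0 (real n) \<notin> null_sets lebesgue"
    then have "(\<Union>n. S \<inter> cball 0 (real n)) \<in> null_sets lebesgue" by (intro null_sets_UN) simp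
    moreover have "S \<subseteq> (\<Union>n. S \<inter> cball 0 (real n))"
    proof
      fix x assume "x \<in> S"
      moreover obtain n where "norm x \<le> real n" using real_arch_simple by blast
      ultimately show "x \<in> (\<Union>n. S \<inter> cball 0 (real n))" by auto
    qed
    ultimately show False using S by (metis null_sets_subset)
  qed
  then obtain n where n: "S \<inter> cball 0 (real n) \<notin> null_sets lebesgue" ..
  have bounded: "bounded (S \<inter> cball 0 (real n))" by (rule bounded_subset[OF bounded_cball Int_lower2])
  then have "S \<inter> cball 0 (real n) \<in> lmeasurable" using S(1) by (intro bounded_set_imp_lmeasurable) auto
  then obtain T where T: "closed T" "T \<subseteq> S \<inter> cball 0 (real n)" "T \<notin> null_sets lebesgue"
    using n by (rule lmeasurable_inner_closed_non_null)
  have "compact T" using T(1) bounded_subset[OF bounded T(2)] by (simp add: compact_eq_bounded_closed)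
  moreover have "T \<subseteq> S" using T(2) by blast
  ultimately show ?thesis using T(3) by (rule that)
qed

lemma measure_Int_atMost_mono_lipschitz:
  fixes K :: "real set"
  assumes K: "K \<in> sets lborel" "bounded K" and "t \<le> s"
  shows "measure lborel (K \<inter> {..t}) \<le> measure lborel (K \<inter> {..s})"
    and "measure lborel (K \<inter> {..s}) \<le> measure lborel (K \<inter> {..t}) + (s - t)"
proof -
  have fm: "K \<inter> {..r} \<in> fmeasurable lborel" for r
    using K by (intro fmeasurableI emeasure_bounded_finite) (auto intro: bounded_subset)
  show "measure lborel (K \<inter> {..t}) \<le> measure lborel (K \<inter> {..s})"
    using \<open>t \<le> s\<close> fmeasurableD[OF fm[of t]] fm[of s] by (intro measure_mono_fmeasurable) auto
  have "measure lborel (K \<inter> {..s}) \<le> measure lborel ((K \<inter> {..t}) \<union> {t<..s})"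
    using fmeasurableD[OF fm[of s]] fm[of t] \<open>t \<le> s\<close>
    by (intro measure_mono_fmeasurable fmeasurable.Un) (auto simp: fmeasurable_def emeasure_lborel_Ioc)
  also have "\<dots> \<le> measure lborel (K \<inter> {..t}) + measure lborel {t<..s}"
    using fmeasurableD[OF fm[of t]] by (intro measure_Un_le) auto
  finally show "measure lborel (K \<inter> {..s}) \<le> measure lborel (K \<inter> {..t}) + (s - t)"
    using \<open>t \<le> s\<close> by simp
qed

lemma ex_least_level_point:
  fixes g :: "real \<Rightarrow> real"
  assumes mono: "\<And>t s. t \<le> s \<Longrightarrow> g t \<le> g s" and lip: "\<And>t s. t \<le> s \<Longrightarrow> g s \<le> g t + (s - t)"
    and y: "g a < y" "y < g b"
  obtains t where "g t = y" "\<And>e. e > 0 \<Longrightarrow> g (t - e) < y"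
proof -
  define S where "S = {t. y \<le> g t}"
  have "b \<in> S" using y unfolding S_def by simp
  moreover have bdd: "bdd_below S"
  proof (rule bdd_belowI)
    fix t assume "t \<in> S"
    show "a \<le> t"
    proof (rule ccontr)
      assume "\<not> a \<le> t"
      then have "g t \<le> g a" using mono by simp
      then show False using \<open>t \<in> S\<close> y unfolding S_def by simp
    qed
  qed
  ultimately have below: "g (Inf S - e) < y" if "e > 0" for e
    using cInf_lower[of "Inf S - e" S] that unfolding S_def by force
  have "g (Inf S) \<le> y"
  proof (rule field_le_epsilon)
    fix e :: real assume "e > 0"
    then show "g (Inf S) \<le> y + e" using below[of e] lip[of "Inf S - e" "Inf S"] by simp
  qed
  moreover have "y \<le> g (Inf S)"
  proof (rule field_le_epsilon)
    fix e :: real assume "e > 0"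
    then obtain t where "t \<in> S" "t < Inf S + e"
      using cInf_lessD[of S "Inf S + e"] \<open>b \<in> S\<close> by auto
    moreover have "Inf S \<le> t" using \<open>t \<in> S\<close> bdd by (rule cInf_lower)
    ultimately show "y \<le> g (Inf S) + e" using lip[of "Inf S" t] unfolding S_def by simp
  qed
  ultimately have "g (Inf S) = y" by simp
  then show ?thesis using below by (rule that)
qed

(* The least point at which the distribution function of K reaches y lies in K. *)
lemma compact_level_point:
  fixes K :: "real set"
  assumes K: "compact K" and y: "0 < y" "y < measure lborel K"
  obtains t where "t \<in> K" "measure lborel (K \<inter> {..t}) = y"
proof -
  define g where "g t = measure lborel (K \<inter> {..t})" for t
  have Kb: "K \<in> sets lborel" "bounded K"
    using borel_compact[OF K] compact_imp_bounded[OF K] by simp_all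
  have g_mono: "g t \<le> g s" and g_lip: "g s \<le> g t + (s - t)" if "t \<le> s" for t s
    using measure_Int_atMost_mono_lipschitz[OF Kb that] unfolding g_def by simp_all
  obtain r where r: "\<And>x. x \<in> K \<Longrightarrow> \<bar>x\<bar> \<le> r" using Kb(2) unfolding bounded_real by blast
  have "K \<inter> {..- r - 1} = {}" using r by force
  moreover have "K \<inter> {..r} = K" using r by force
  ultimately have y': "g (- r - 1) < y" "y < g r" using y unfolding g_def by simp_all
  obtain t where t: "g t = y" "\<And>e. e > 0 \<Longrightarrow> g (t - e) < y"
    using ex_least_level_point[of g "- r - 1" y r, OF g_mono g_lip y'] by blast
  have "t \<in> K"
  proof (rule ccontr)
    assume "t \<notin> K"
    moreover have "open (- K)" using compact_imp_closed[OF K] by (simp add: closed_def)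
    ultimately obtain e where e: "e > 0" "ball t e \<subseteq> - K" using open_contains_ball by blast
    have "x \<le> t - e/2" if "x \<in> K" "x \<le> t" for x
    proof (rule ccontr)
      assume "\<not> x \<le> t - e/2"
      then have "x \<in> ball t e" using that e by (auto simp: dist_real_def)
      then show False using that e by blast
    qed
    then have "K \<inter> {..t} = K \<inter> {..t - e/2}" using e(1) by fastforce
    then have "g (t - e/2) = y" using t(1) unfolding g_def by simp
    then show False using t(2)[of "e/2"] e(1) by simp
  qed
  then show ?thesis using t(1) unfolding g_def by (rule that)
qed

lemma compact_non_null_not_less_continuum:
  fixes K :: "real set"
  assumes K: "compact K" "K \<notin> null_sets lebesgue"
  shows "\<not> less_continuum K"
proof
  assume small: "less_continuum K"
  define m where "m = measure lborel K"
  have "K \<in> fmeasurable lborel"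
    using compact_imp_bounded[OF K(1)] borel_compact[OF K(1)]
    by (intro fmeasurableI emeasure_bounded_finite) auto
  then have "emeasure lborel K = ennreal m" unfolding m_def by (rule emeasure_eq_measure2)
  moreover have "emeasure lborel K \<noteq> 0"
    using K(2) borel_compact[OF K(1)] by (auto intro: null_sets_completionI null_setsI)
  ultimately have "m \<noteq> 0" by (metis ennreal_0)
  then have "m > 0" unfolding m_def by (simp add: zero_less_measure_iff)
  define \<tau> where "\<tau> y = (SOME t. t \<in> K \<and> measure lborel (K \<inter> {..t}) = y)" for y
  have \<tau>: "\<tau> y \<in> K \<and> measure lborel (K \<inter> {..\<tau> y}) = y" if y: "y \<in> {0<..<m}" for y
  proof -
    have "0 < y" "y < measure lborel K" using y unfolding m_def by simp_all
    then obtain t where "t \<in> K" "measure lborel (K \<inter> {..t}) = y" by (rule compact_level_point[OF K(1)])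
    then have "t \<in> K \<and> measure lborel (K \<inter> {..t}) = y" ..
    then show ?thesis unfolding \<tau>_def by (rule someI)
  qed
  have "inj_on \<tau> {0<..<m}"
  proof (rule inj_onI)
    fix y y' assume y: "y \<in> {0<..<m}" "y' \<in> {0<..<m}" and eq: "\<tau> y = \<tau> y'"
    have "y = measure lborel (K \<inter> {..\<tau> y})" using \<tau>[OF y(1)] by simp
    also have "\<dots> = y'" using \<tau>[OF y(2)] eq by simp
    finally show "y = y'" .
  qed
  moreover have "\<tau> ` {0<..<m} \<subseteq> K" using \<tau> by (intro image_subsetI) simp
  then have "less_continuum (\<tau> ` {0<..<m})" using small by (rule less_continuum_subset)
  ultimately have "less_continuum {0<..<m}" by (rule less_continuum_inj_on)
  with interval_not_less_continuum[OF \<open>m > 0\<close> subset_refl] show False by contradiction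
qed

lemma lebesgue_not_less_continuum:
  fixes S :: "real set"
  assumes "S \<in> sets lebesgue" "S \<notin> null_sets lebesgue"
  shows "\<not> less_continuum S"
proof
  assume "less_continuum S"
  obtain K where "compact K" "K \<subseteq> S" "K \<notin> null_sets lebesgue"
    using lebesgue_inner_compact_non_null[OF assms] .
  then show False
    using compact_non_null_not_less_continuum less_continuum_subset[OF _ \<open>less_continuum S\<close>] by blast
qed

lemma norm_vector_2: "norm (vector [a, b] :: real^2) = norm (a, b)"
  by (simp add: norm_eq_sqrt_inner inner_vec_def sum_2 norm_Pair power2_eq_square)

lemma lborel_vector_2_vimage:
  fixes W :: "(real^2) set"
  assumes "W \<in> sets borel" "W \<notin> null_sets lebesgue"
  shows "(\<lambda>z. vector [fst z, snd z]) -` W \<in> sets borel"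
    and "emeasure lborel ((\<lambda>z. vector [fst z, snd z]) -` W) \<noteq> 0"
proof -
  let ?f = "\<lambda>z :: real \<times> real. vector [fst z, snd z] :: real^2"
  have "continuous_on UNIV ?f" unfolding vector_2_eq_axis by (intro continuous_intros)
  then show W': "?f -` W \<in> sets borel"
    using assms(1) borel_measurable_continuous_onI measurable_sets_borel by blast
  have "?f ` (?f -` W) = W"
    by (auto simp: image_iff vec_eq_iff forall_2 intro!: exI[of _ "(x $ 1, x $ 2)" for x])
  moreover have "negligible (?f ` (?f -` W))" if "negligible (?f -` W)"
  proof (rule negligible_locally_Lipschitz_image)
    show "\<exists>T B. open T \<and> z \<in> T \<and> (\<forall>y \<in> ?f -` W \<inter> T. norm (?f y - ?f z) \<le> B * norm (y - z))" for z
    proof (intro exI[of _ UNIV] exI[of _ 1] conjI ballI)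
      fix y :: "real \<times> real"
      have "?f y - ?f z = vector [fst (y - z), snd (y - z)]" by (simp add: vec_eq_iff forall_2 fst_diff snd_diff)
      then have "norm (?f y - ?f z) = norm (y - z)" by (simp only: norm_vector_2 prod.collapse)
      then show "norm (?f y - ?f z) \<le> 1 * norm (y - z)" by simp
    qed auto
  qed (use that in auto)
  ultimately have "?f -` W \<notin> null_sets lebesgue" using assms(2) by (auto simp: negligible_iff_null_sets)
  then show "emeasure lborel (?f -` W) \<noteq> 0"
    using W' null_sets_completion_iff[of "?f -` W" lborel] by (auto intro: null_setsI)
qed

lemma sets_lborel_pair: "sets (lborel \<Otimes>\<^sub>M lborel) = sets (borel :: (real \<times> real) measure)"
  by (simp only: lborel_prod sets_lborel)

lemma lborel_pair_non_null_sections: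
  fixes W :: "(real \<times> real) set"
  assumes W: "W \<in> sets borel" "emeasure lborel W \<noteq> 0"
  defines "X \<equiv> {a. emeasure lborel (Pair a -` W) \<noteq> 0}"
  shows "X \<in> sets borel" and "emeasure lborel X \<noteq> 0"
proof -
  have Wp: "W \<in> sets (lborel \<Otimes>\<^sub>M lborel)" using W(1) by (simp only: sets_lborel_pair)
  have meas: "(\<lambda>a. emeasure lborel (Pair a -` W)) \<in> borel_measurable lborel"
    by (rule lborel.measurable_emeasure_Pair[OF Wp])
  have "X = (\<lambda>a. emeasure lborel (Pair a -` W)) -` (UNIV - {0}) \<inter> space lborel"
    unfolding X_def by auto
  also have "\<dots> \<in> sets lborel" using meas by (intro measurable_sets) auto
  finally show X: "X \<in> sets borel" by simp
  have "(\<integral>\<^sup>+ a. emeasure lborel (Pair a -` W) \<partial>lborel) = emeasure lborel W"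
    using lborel.emeasure_pair_measure_alt[OF Wp] by (simp add: lborel_prod)
  then have "\<not> (AE a in lborel. emeasure lborel (Pair a -` W) = 0)"
    using W(2) nn_integral_0_iff_AE[OF meas] by simp
  then show "emeasure lborel X \<noteq> 0"
    using X unfolding X_def by (auto simp: AE_iff_null null_setsI)
qed

lemma compact_non_null_no_small_cover:
  fixes W :: "(real^2) set"
  assumes "compact W" "W \<notin> null_sets lebesgue"
  shows "no_small_cover W"
proof (rule no_small_cover_if_sections)
  let ?W' = "(\<lambda>z. vector [fst z, snd z]) -` W"
  have W: "W \<in> sets borel" using assms(1) by (rule borel_compact)
  note W' = lborel_vector_2_vimage[OF W assms(2)]
  have W'p: "?W' \<in> sets (lborel \<Otimes>\<^sub>M lborel)" using W'(1) by (simp only: sets_lborel_pair)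
  have not_small: "\<not> less_continuum S" if "S \<in> sets borel" "emeasure lborel S \<noteq> 0" for S :: "real set"
    using that null_sets_completion_iff[of S lborel]
    by (intro lebesgue_not_less_continuum) (auto dest: null_setsD1)
  show "\<not> less_continuum {a. emeasure lborel (Pair a -` ?W') \<noteq> 0}"
    using lborel_pair_non_null_sections[OF W'] by (rule not_small)
  show "\<not> less_continuum {b. vector [a, b] \<in> W}" if "a \<in> {a. emeasure lborel (Pair a -` ?W') \<noteq> 0}" for a
  proof -
    have "Pair a -` ?W' = {b. vector [a, b] \<in> W}" by auto
    moreover have "Pair a -` ?W' \<in> sets borel" using sets_Pair1[OF W'p] by simp
    ultimately show ?thesis using that not_small by auto
  qed
qed

lemma null_sets_lebesgue_insert: "C \<in> null_sets lebesgue \<Longrightarrow> insert a C \<in> null_sets lebesgue"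
  using null_sets.Un[OF null_sets_completionI[OF finite_imp_null_set_lborel[of "{a}"]]] by simp

lemma disc_null_completely_nonmeasurable_projections:
  "\<exists>A. A \<subseteq> cball (0::real^2) 1 \<and>
     completely_nonmeasurable plane_null (sets borel) (cball 0 1) A \<and>
     (\<forall>p u. norm u = 1 \<longrightarrow>
        completely_nonmeasurable (line_null p u) (line_borel p u)
          (orth_proj p u ` sphere 0 1) (orth_proj p u ` A))"
  unfolding line_null_def[abs_def]
proof (rule ex_completely_nonmeasurable_disc_projections)
  let ?K = "\<lambda>S. compact S \<and> S \<notin> null_sets lebesgue"
  show "\<exists>W\<subseteq>B. ?K W" if "B \<in> sets borel" "\<not> plane_null B" for B :: "(real^2) set"
    using that lebesgue_inner_compact_non_null[of B] unfolding plane_null_def by auto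
  show "\<exists>T\<subseteq>C. ?K T" if "C \<in> sets borel" "C \<notin> null_sets lebesgue" for C :: "real set"
    using that lebesgue_inner_compact_non_null[of C] by auto
  show "C \<in> null_sets lebesgue" if "C \<subseteq> D" "D \<in> null_sets lebesgue" for C D :: "real set"
    using that by (rule null_sets_completion_subset)
  show "insert a C \<in> null_sets lebesgue" if "C \<in> null_sets lebesgue" for C :: "real set" and a
    using that by (rule null_sets_lebesgue_insert)
  show "no_small_cover W" if "?K W" for W
    using that compact_non_null_no_small_cover by blast
  show "\<not> less_continuum C" if "?K C" for C :: "real set"
    using that borel_compact[of C] by (intro lebesgue_not_less_continuum) auto
  show "|Collect ?K| \<le>o |UNIV :: real set|" "|Collect ?K| \<le>o |UNIV :: real set|"
    by (rule ordLeq_transitive[OF card_of_mono1 card_of_closed_sets], auto intro: compact_imp_closed)+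
qed

section \<open>Meager sets\<close>

lemma meager_subset: "S \<subseteq> T \<Longrightarrow> meager T \<Longrightarrow> meager S"
  unfolding meager_def by blast

lemma nowhere_dense_imp_meager: "nowhere_dense S \<Longrightarrow> meager S"
  unfolding meager_def by (intro exI[of _ "\<lambda>_. S"]) auto

lemma meager_empty: "meager {}"
  by (rule nowhere_dense_imp_meager) (simp add: nowhere_dense_def)

lemma meager_UN:
  fixes S :: "nat \<Rightarrow> 'a::topological_space set"
  assumes "\<And>n. meager (S n)"
  shows "meager (\<Union>n. S n)"
proof -
  have "\<forall>n. \<exists>F. (\<forall>k. nowhere_dense (F k)) \<and> S n \<subseteq> (\<Union>k::nat. F k)"
    using assms unfolding meager_def by blast
  then have "\<exists>F. \<forall>n. (\<forall>k. nowhere_dense (F n k)) \<and> S n \<subseteq> (\<Union>k::nat. F n k)" by (rule choice)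
  then obtain F where F: "\<And>n k. nowhere_dense (F n k)" "\<And>n. S n \<subseteq> (\<Union>k::nat. F n k)"
    by blast
  define G where "G m = F (fst (prod_decode m)) (snd (prod_decode m))" for m
  have "(\<Union>n. S n) \<subseteq> (\<Union>m. G m)"
  proof
    fix x assume "x \<in> (\<Union>n. S n)"
    then obtain n k where "x \<in> F n k" using F(2) by blast
    then have "x \<in> G (prod_encode (n, k))" unfolding G_def by simp
    then show "x \<in> (\<Union>m. G m)" by blast
  qed
  moreover have "nowhere_dense (G m)" for m unfolding G_def by (rule F(1))
  ultimately show ?thesis unfolding meager_def by blast
qed

lemma meager_Un:
  assumes "meager S" "meager T" shows "meager (S \<union> T)"
proof (rule meager_subset)
  show "S \<union> T \<subseteq> (\<Union>n::nat. if n = 0 then S else T)"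
  proof
    fix x assume "x \<in> S \<union> T"
    then show "x \<in> (\<Union>n::nat. if n = 0 then S else T)"
      by (elim UnE) (auto intro: UN_I[of 0] UN_I[of 1])
  qed
  show "meager (\<Union>n::nat. if n = 0 then S else T)" using assms by (intro meager_UN) simp
qed

lemma meager_insert: "meager S \<Longrightarrow> meager (insert (a :: 'a::{t1_space, perfect_space}) S)"
  using meager_Un[OF nowhere_dense_imp_meager[of "{a}"]] by (simp add: nowhere_dense_def)

definition has_baire_property :: "'a::topological_space set \<Rightarrow> bool" where
  "has_baire_property S \<longleftrightarrow> (\<exists>U. open U \<and> meager ((S - U) \<union> (U - S)))"

lemma nowhere_dense_closure_diff_open:
  assumes "open U" shows "nowhere_dense (closure U - U)"
proof -
  have "interior (closure U - U) \<inter> U = {}" using interior_subset by blast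
  then have "interior (closure U - U) \<inter> closure U = {}" by (simp add: open_Int_closure_eq_empty)
  then have "interior (closure U - U) = {}" using interior_subset by blast
  moreover have "closure (closure U - U) = closure U - U" using assms by (simp add: closed_Diff)
  ultimately show ?thesis unfolding nowhere_dense_def by simp
qed

lemma has_baire_property_Compl:
  assumes "has_baire_property S" shows "has_baire_property (- S)"
proof -
  obtain U where U: "open U" "meager ((S - U) \<union> (U - S))"
    using assms unfolding has_baire_property_def by blast
  have "(- S - (- closure U)) \<union> (- closure U - - S) \<subseteq> ((S - U) \<union> (U - S)) \<union> (closure U - U)"
    using closure_subset[of U] by blast
  moreover have "meager (((S - U) \<union> (U - S)) \<union> (closure U - U))"
    using meager_Un[OF U(2) nowhere_dense_imp_meager[OF nowhere_dense_closure_diff_open[OF U(1)]]] .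
  ultimately have "meager ((- S - (- closure U)) \<union> (- closure U - - S))" by (rule meager_subset)
  then show ?thesis unfolding has_baire_property_def by (intro exI[of _ "- closure U"]) (simp add: open_Compl)
qed

lemma has_baire_property_UN:
  assumes "\<And>n::nat. has_baire_property (S n)" shows "has_baire_property (\<Union>n. S n)"
proof -
  have "\<forall>n. \<exists>U. open U \<and> meager ((S n - U) \<union> (U - S n))"
    using assms unfolding has_baire_property_def by blast
  then obtain U where U: "\<And>n. open (U n)" "\<And>n. meager ((S n - U n) \<union> (U n - S n))"
    by (auto dest!: choice)
  have "((\<Union>n. S n) - (\<Union>n. U n)) \<union> ((\<Union>n. U n) - (\<Union>n. S n)) \<subseteq> (\<Union>n. (S n - U n) \<union> (U n - S n))"
    by blast
  moreover have "meager (\<Union>n. (S n - U n) \<union> (U n - S n))" using U(2) by (rule meager_UN)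
  ultimately have "meager (((\<Union>n. S n) - (\<Union>n. U n)) \<union> ((\<Union>n. U n) - (\<Union>n. S n)))"
    by (rule meager_subset)
  then show ?thesis unfolding has_baire_property_def using U(1) by (intro exI[of _ "\<Union>n. U n"]) auto
qed

lemma borel_has_baire_property:
  assumes "S \<in> sets borel" shows "has_baire_property S"
proof -
  have "S \<in> sigma_sets UNIV {S. open S}" using assms by (simp add: sets_borel)
  then show ?thesis
  proof induction
    case (Basic a)
    then show ?case unfolding has_baire_property_def using meager_empty by (intro exI[of _ a]) auto
  next
    case Empty
    then show ?case unfolding has_baire_property_def using meager_empty by (intro exI[of _ "{}"]) auto
  next
    case (Compl a)
    then show ?case using has_baire_property_Compl by (simp add: Compl_eq_Diff_UNIV[symmetric])
  next
    case (Union a)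
    then show ?case by (intro has_baire_property_UN)
  qed
qed

definition open_Int_dense_gdelta :: "'a::topological_space set \<Rightarrow> bool" where
  "open_Int_dense_gdelta C \<longleftrightarrow> (\<exists>U \<V>. open U \<and> U \<noteq> {} \<and> countable \<V> \<and>
     (\<forall>V\<in>\<V>. open V \<and> closure V = UNIV) \<and> C = U \<inter> \<Inter>\<V>)"

lemma borel_non_meager_obtains_open_Int_dense_gdelta:
  assumes "S \<in> sets borel" "\<not> meager S"
  obtains C where "C \<subseteq> S" "open_Int_dense_gdelta C"
proof -
  obtain U where U: "open U" "meager ((S - U) \<union> (U - S))"
    using borel_has_baire_property[OF assms(1)] unfolding has_baire_property_def by blast
  from U(2) obtain F :: "nat \<Rightarrow> _" where F: "\<forall>n. nowhere_dense (F n)" "(S - U) \<union> (U - S) \<subseteq> (\<Union>n. F n)"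
    unfolding meager_def by auto
  define V where "V n = - closure (F n)" for n
  have V: "open (V n)" "closure (V n) = UNIV" for n
    using F(1) unfolding V_def nowhere_dense_def by (auto simp: closure_complement)
  have "U \<noteq> {}"
  proof
    assume "U = {}"
    then have "S \<subseteq> (S - U) \<union> (U - S)" by blast
    then show False using meager_subset U(2) assms(2) by blast
  qed
  moreover have "U \<inter> \<Inter>(range V) \<subseteq> S"
  proof
    fix x assume x: "x \<in> U \<inter> \<Inter>(range V)"
    show "x \<in> S"
    proof (rule ccontr)
      assume "x \<notin> S"
      then obtain n where "x \<in> F n" using x F(2) by blast
      then show False using x closure_subset[of "F n"] unfolding V_def by blast
    qed
  qed
  moreover have "open_Int_dense_gdelta (U \<inter> \<Inter>(range V))"
    unfolding open_Int_dense_gdelta_def using U(1) \<open>U \<noteq> {}\<close> V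
    by (intro exI[of _ U] exI[of _ "range V"]) auto
  ultimately show ?thesis by (intro that)
qed

lemma card_of_open_Int_dense_gdelta:
  "|Collect (open_Int_dense_gdelta :: 'a::second_countable_topology set \<Rightarrow> bool)| \<le>o |UNIV :: real set|"
proof -
  have "C \<in> {\<Inter>(range F) | F :: nat \<Rightarrow> 'a set. \<forall>n. open (F n)}" if "open_Int_dense_gdelta C" for C
  proof -
    from that obtain U \<V> where UV: "open U" "countable \<V>" "\<forall>V\<in>\<V>. open V" "C = U \<inter> \<Inter>\<V>"
      unfolding open_Int_dense_gdelta_def by auto
    define \<V>' where "\<V>' = (if \<V> = {} then {UNIV} else \<V>)"
    have \<V>': "\<V>' \<noteq> {}" "countable \<V>'" "\<forall>V\<in>\<V>'. open V" "\<Inter>\<V>' = \<Inter>\<V>"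
      using UV(2,3) unfolding \<V>'_def by auto
    define F where "F n = (case n of 0 \<Rightarrow> U | Suc m \<Rightarrow> from_nat_into \<V>' m)" for n
    have "open (F n)" for n using UV(1) \<V>' from_nat_into[OF \<V>'(1)] unfolding F_def by (cases n) auto
    moreover have "\<Inter>(range F) = U \<inter> \<Inter>(range (from_nat_into \<V>'))"
    proof (intro equalityI subsetI)
      fix x assume "x \<in> \<Inter>(range F)"
      then have "x \<in> F 0" "\<And>m. x \<in> F (Suc m)" by blast+
      then show "x \<in> U \<inter> \<Inter>(range (from_nat_into \<V>'))" unfolding F_def by auto
    next
      fix x assume "x \<in> U \<inter> \<Inter>(range (from_nat_into \<V>'))"
      then show "x \<in> \<Inter>(range F)" unfolding F_def by (auto split: nat.split)
    qed
    then have "\<Inter>(range F) = C" using UV(4) \<V>' range_from_nat_into[OF \<V>'(1,2)] by simp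
    ultimately show ?thesis by blast
  qed
  then have "Collect open_Int_dense_gdelta \<subseteq> {\<Inter>(range F) | F :: nat \<Rightarrow> 'a set. \<forall>n. open (F n)}"
    by blast
  then show ?thesis by (rule ordLeq_transitive[OF card_of_mono1 card_of_countable_Inter_open])
qed

lemma differences_not_less_continuum:
  fixes C :: "real set"
  assumes r: "r > 0" and diff: "\<And>d. 0 < d \<Longrightarrow> d < r \<Longrightarrow> \<exists>x\<in>C. x - d \<in> C"
  shows "\<not> less_continuum C"
proof
  assume "less_continuum C"
  then have "less_continuum ((\<lambda>(x, y). x - y) ` (C \<times> C))"
    by (intro less_continuum_image less_continuum_Times)
  moreover have "{0<..<r} \<subseteq> (\<lambda>(x, y). x - y) ` (C \<times> C)"
  proof
    fix d assume "d \<in> {0<..<r}"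
    then obtain x where "x \<in> C" "x - d \<in> C" using diff by auto
    then show "d \<in> (\<lambda>(x, y). x - y) ` (C \<times> C)" by (intro image_eqI[of _ _ "(x, x - d)"]) auto
  qed
  ultimately show False using interval_not_less_continuum[OF r] by blast
qed

lemma baire_open_Int_dense:
  fixes \<G> :: "'a::{real_normed_vector, heine_borel} set set"
  assumes "countable \<G>" "\<And>V. V \<in> \<G> \<Longrightarrow> open V \<and> closure V = UNIV" "open S" "S \<noteq> {}"
  shows "S \<inter> \<Inter>\<G> \<noteq> {}"
proof -
  have "UNIV \<subseteq> closure (\<Inter>\<G>)"
    by (rule Baire[of UNIV \<G>]) (use assms in \<open>auto simp: subtopology_UNIV\<close>)
  then show ?thesis using open_Int_closure_eq_empty[OF assms(3), of "\<Inter>\<G>"] assms(4) by auto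
qed

(* By Baire, C meets its translate C + d for all small d > 0. *)
lemma open_Int_dense_gdelta_not_less_continuum:
  fixes C :: "real set"
  assumes "open_Int_dense_gdelta C"
  shows "\<not> less_continuum C"
proof -
  from assms obtain U \<V> where UV: "open U" "U \<noteq> {}" "countable \<V>"
    "\<forall>V\<in>\<V>. open V \<and> closure V = UNIV" "C = U \<inter> \<Inter>\<V>"
    unfolding open_Int_dense_gdelta_def by auto
  obtain z where "z \<in> U" using UV(2) by blast
  then obtain r where r: "r > 0" "ball z r \<subseteq> U" using UV(1) open_contains_ball by blast
  show ?thesis
  proof (rule differences_not_less_continuum[OF r(1)])
    fix d :: real assume d: "0 < d" "d < r"
    define \<G> where "\<G> = \<V> \<union> (\<lambda>V. (+) d ` V) ` \<V>"
    have "open V \<and> closure V = UNIV" if "V \<in> \<G>" for V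
      using that UV(4) open_translation[of _ d] surj_plus[of d]
      unfolding \<G>_def by (auto simp: closure_translation)
    moreover have "open (U \<inter> (+) d ` U)" using UV(1) open_translation by blast
    moreover have "z + d/2 \<in> U \<inter> (+) d ` U"
    proof -
      have "z + d/2 \<in> U" "z - d/2 \<in> U" using r d by (auto intro!: subsetD[OF r(2)] simp: dist_norm)
      then show ?thesis by (auto intro: image_eqI[of _ _ "z - d/2"])
    qed
    ultimately obtain x where x: "x \<in> U \<inter> (+) d ` U" "x \<in> \<Inter>\<G>"
      using baire_open_Int_dense[of \<G> "U \<inter> (+) d ` U"] UV(3) unfolding \<G>_def by blast
    have "x \<in> V" "x - d \<in> V" if "V \<in> \<V>" for V
    proof -
      show "x \<in> V" using x(2) that unfolding \<G>_def by blast
      have "x \<in> (+) d ` V" using x(2) that unfolding \<G>_def by blast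
      then show "x - d \<in> V" by auto
    qed
    moreover have "x \<in> U" "x - d \<in> U" using x(1) by auto
    ultimately have "x \<in> C" "x - d \<in> C" unfolding UV(5) by blast+
    then show "\<exists>x\<in>C. x - d \<in> C" by blast
  qed
qed

lemma open_dense_shadow:
  fixes V :: "(real^2) set" and \<beta> :: "real set"
  assumes V: "open V" "closure V = UNIV" and \<beta>: "open \<beta>" "\<beta> \<noteq> {}"
  shows "open {a. \<exists>y\<in>\<beta>. vector [a, y] \<in> V}" and "closure {a. \<exists>y\<in>\<beta>. vector [a, y] \<in> V} = UNIV"
proof -
  have "{a. \<exists>y\<in>\<beta>. vector [a, y] \<in> V} = (\<Union>y\<in>\<beta>. (\<lambda>a. vector [a, y]) -` V)" by auto
  then show "open {a. \<exists>y\<in>\<beta>. vector [a, y] \<in> V}"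
    using V(1) by (auto intro!: open_UN open_vimage continuous_on_vector_2)
  have "a \<in> closure {a. \<exists>y\<in>\<beta>. vector [a, y] \<in> V}" for a
    unfolding closure_approachable
  proof (intro allI impI)
    fix e :: real assume "e > 0"
    define R :: "(real^2) set" where "R = (\<lambda>x. x $ 1) -` ball a e \<inter> (\<lambda>x. x $ 2) -` \<beta>"
    have "open R" unfolding R_def using \<beta>(1) by (intro open_Int open_vimage_vec_nth) auto
    moreover obtain y where "y \<in> \<beta>" using \<beta>(2) by blast
    then have "vector [a, y] \<in> R" using \<open>e > 0\<close> unfolding R_def by simp
    ultimately have "R \<inter> V \<noteq> {}" using V(2) open_Int_closure_eq_empty[of R V] by auto
    then obtain x where x: "x \<in> R" "x \<in> V" by blast
    have "vector [x $ 1, x $ 2] = x" by (simp add: vec_eq_iff forall_2)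
    then have "x $ 1 \<in> {a. \<exists>y\<in>\<beta>. vector [a, y] \<in> V}"
      using x unfolding R_def by (intro CollectI bexI[of _ "x $ 2"]) auto
    moreover have "dist (x $ 1) a < e" using x(1) unfolding R_def by (simp add: dist_commute)
    ultimately show "\<exists>a'\<in>{a. \<exists>y\<in>\<beta>. vector [a, y] \<in> V}. dist a' a < e" by blast
  qed
  then show "closure {a. \<exists>y\<in>\<beta>. vector [a, y] \<in> V} = UNIV" by blast
qed

lemma subset_closure_if_meets_basis:
  assumes \<B>: "topological_basis \<B>" and J: "open J"
    and meets: "\<And>\<beta>. \<beta> \<in> \<B> \<Longrightarrow> \<beta> \<subseteq> J \<Longrightarrow> \<beta> \<noteq> {} \<Longrightarrow> \<beta> \<inter> S \<noteq> {}"
  shows "J \<subseteq> closure S"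
proof
  fix x assume "x \<in> J"
  show "x \<in> closure S"
    unfolding closure_iff_nhds_not_empty
  proof (intro allI impI)
    fix A T assume "T \<subseteq> A" "open T" "x \<in> T"
    then obtain \<beta> where "\<beta> \<in> \<B>" "x \<in> \<beta>" "\<beta> \<subseteq> T \<inter> J"
      using topological_basisE[OF \<B>, of "T \<inter> J" x] J \<open>x \<in> J\<close> by blast
    then show "S \<inter> A \<noteq> {}" using meets[of \<beta>] \<open>T \<subseteq> A\<close> by blast
  qed
qed

lemma vector_2_in_ball:
  fixes z :: "real^2"
  assumes "a \<in> ball (z $ 1) (r/2)" "b \<in> ball (z $ 2) (r/2)"
  shows "vector [a, b] \<in> ball z r"
proof -
  have "norm (vector [a, b] - z) \<le> \<bar>(vector [a, b] - z) $ 1\<bar> + \<bar>(vector [a, b] - z) $ 2\<bar>"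
    using norm_le_l1_cart[of "vector [a, b] - z"] by (simp add: sum_2)
  also have "\<dots> < r" using assms by (simp add: dist_real_def abs_minus_commute)
  finally show ?thesis by (simp add: dist_norm norm_minus_commute)
qed

lemma open_Int_dense_gdelta_section:
  fixes \<V> :: "(real^2) set set"
  assumes \<B>: "topological_basis \<B>" and J: "open J" "J \<noteq> {}" and \<V>: "countable \<V>" "\<forall>V\<in>\<V>. open V"
    and hits: "\<And>V \<beta>. V \<in> \<V> \<Longrightarrow> \<beta> \<in> \<B> \<Longrightarrow> \<beta> \<subseteq> J \<Longrightarrow> \<beta> \<noteq> {} \<Longrightarrow> \<exists>y\<in>\<beta>. vector [a, y] \<in> V"
  shows "open_Int_dense_gdelta (J \<inter> \<Inter>((\<lambda>V. {b. vector [a, b] \<in> V} \<union> - closure J) ` \<V>))"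
  unfolding open_Int_dense_gdelta_def
proof (intro exI conjI ballI)
  fix X assume "X \<in> (\<lambda>V. {b. vector [a, b] \<in> V} \<union> - closure J) ` \<V>"
  then obtain V where V: "V \<in> \<V>" "X = {b. vector [a, b] \<in> V} \<union> - closure J" by blast
  have "open {b. vector [a, b] \<in> V}"
    using open_vimage[OF _ continuous_on_vector_2(1), of V a] \<V>(2) V(1) by (simp add: vimage_def)
  then show "open X" unfolding V(2) by (intro open_Un open_Compl closed_closure)
  have "J \<subseteq> closure {b. vector [a, b] \<in> V}"
    using hits[OF V(1)] by (intro subset_closure_if_meets_basis[OF \<B> J(1)]) blast
  then have "closure J \<subseteq> closure {b. vector [a, b] \<in> V}" by (metis closure_closure closure_mono)
  then show "closure X = UNIV" unfolding V(2) closure_Un using closure_subset[of "- closure J"] by blast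
qed (use J \<V> in auto)

(* Kuratowski-Ulam for a single set: a is good if over every basic interval of J the vertical
   line through a meets every dense open V of W, and the good a form a set of the same kind. *)
lemma open_Int_dense_gdelta_sections:
  fixes W :: "(real^2) set"
  assumes "open_Int_dense_gdelta W"
  obtains X where "open_Int_dense_gdelta X"
    "\<And>a. a \<in> X \<Longrightarrow> \<exists>Y. open_Int_dense_gdelta Y \<and> Y \<subseteq> {b. vector [a, b] \<in> W}"
proof -
  from assms obtain U \<V> where UV: "open U" "U \<noteq> {}" "countable \<V>"
    "\<forall>V\<in>\<V>. open V \<and> closure V = UNIV" "W = U \<inter> \<Inter>\<V>"
    unfolding open_Int_dense_gdelta_def by auto
  obtain z where "z \<in> U" using UV(2) by blast
  then obtain r where r: "r > 0" "ball z r \<subseteq> U" using UV(1) open_contains_ball by blast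
  define I where "I = ball (z $ 1) (r/2)"
  define J where "J = ball (z $ 2) (r/2)"
  have IJ: "vector [a, b] \<in> U" if "a \<in> I" "b \<in> J" for a b
    using vector_2_in_ball[of a z r b] that r(2) unfolding I_def J_def by blast
  obtain \<B> :: "real set set" where \<B>: "countable \<B>" "topological_basis \<B>"
    using ex_countable_basis by blast
  define shadows where "shadows = (\<lambda>(V, \<beta>). {a. \<exists>y\<in>\<beta>. vector [a, y] \<in> V}) ` (\<V> \<times> {\<beta>\<in>\<B>. \<beta> \<subseteq> J \<and> \<beta> \<noteq> {}})"
  have "open_Int_dense_gdelta (I \<inter> \<Inter>shadows)"
    unfolding open_Int_dense_gdelta_def
  proof (intro exI conjI ballI)
    fix S assume "S \<in> shadows"
    then obtain V \<beta> where V\<beta>: "V \<in> \<V>" "\<beta> \<in> \<B>" "\<beta> \<noteq> {}" "S = {a. \<exists>y\<in>\<beta>. vector [a, y] \<in> V}"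
      unfolding shadows_def by auto
    have "open \<beta>" using \<B>(2) V\<beta>(2) by (rule topological_basis_open)
    then show "open S" "closure S = UNIV"
      using open_dense_shadow[of V \<beta>] UV(4) V\<beta> by auto
  qed (use r UV(3) \<B>(1) in \<open>auto simp: I_def shadows_def\<close>)
  moreover have "\<exists>Y. open_Int_dense_gdelta Y \<and> Y \<subseteq> {b. vector [a, b] \<in> W}" if a: "a \<in> I \<inter> \<Inter>shadows" for a
  proof (intro exI conjI)
    show "open_Int_dense_gdelta (J \<inter> \<Inter>((\<lambda>V. {b. vector [a, b] \<in> V} \<union> - closure J) ` \<V>))"
      using UV(3,4) a r(1) \<B>(2) unfolding shadows_def J_def
      by (intro open_Int_dense_gdelta_section) auto
    show "J \<inter> \<Inter>((\<lambda>V. {b. vector [a, b] \<in> V} \<union> - closure J) ` \<V>) \<subseteq> {b. vector [a, b] \<in> W}"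
      using IJ a closure_subset[of J] unfolding UV(5) by blast
  qed
  ultimately show ?thesis using that by blast
qed

lemma open_Int_dense_gdelta_no_small_cover:
  fixes W :: "(real^2) set"
  assumes "open_Int_dense_gdelta W"
  shows "no_small_cover W"
proof -
  obtain X where X: "open_Int_dense_gdelta X"
    "\<And>a. a \<in> X \<Longrightarrow> \<exists>Y. open_Int_dense_gdelta Y \<and> Y \<subseteq> {b. vector [a, b] \<in> W}"
    using open_Int_dense_gdelta_sections[OF assms(1)] by blast
  show ?thesis
  proof (rule no_small_cover_if_sections)
    show "\<not> less_continuum X" using X(1) by (rule open_Int_dense_gdelta_not_less_continuum)
    show "\<not> less_continuum {b. vector [a, b] \<in> W}" if "a \<in> X" for a
      using X(2)[OF that] open_Int_dense_gdelta_not_less_continuum less_continuum_subset by blast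
  qed
qed

lemma disc_meager_completely_nonmeasurable_projections:
  "\<exists>A. A \<subseteq> cball (0::real^2) 1 \<and>
     completely_nonmeasurable plane_meager (sets borel) (cball 0 1) A \<and>
     (\<forall>p u. norm u = 1 \<longrightarrow>
        completely_nonmeasurable (line_meager p u) (line_borel p u)
          (orth_proj p u ` sphere 0 1) (orth_proj p u ` A))"
  unfolding line_meager_def[abs_def]
proof (rule ex_completely_nonmeasurable_disc_projections)
  show "\<exists>W\<subseteq>B. open_Int_dense_gdelta W" if "B \<in> sets borel" "\<not> plane_meager B" for B :: "(real^2) set"
    using borel_non_meager_obtains_open_Int_dense_gdelta[of B] that unfolding plane_meager_def by metis
  show "\<exists>T\<subseteq>C. open_Int_dense_gdelta T" if "C \<in> sets borel" "\<not> meager C" for C :: "real set"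
    using borel_non_meager_obtains_open_Int_dense_gdelta[of C] that by metis
  show "meager C" if "C \<subseteq> D" "meager D" for C D :: "real set"
    using that by (rule meager_subset)
  show "meager (insert a C)" if "meager C" for C :: "real set" and a
    using that by (rule meager_insert)
  show "no_small_cover W" if "open_Int_dense_gdelta W" for W :: "(real^2) set"
    using that by (rule open_Int_dense_gdelta_no_small_cover)
  show "\<not> less_continuum C" if "open_Int_dense_gdelta C" for C :: "real set"
    using that by (rule open_Int_dense_gdelta_not_less_continuum)
  show "|Collect (open_Int_dense_gdelta :: (real^2) set \<Rightarrow> bool)| \<le>o |UNIV :: real set|"
    by (rule card_of_open_Int_dense_gdelta)
  show "|Collect (open_Int_dense_gdelta :: real set \<Rightarrow> bool)| \<le>o |UNIV :: real set|"
    by (rule card_of_open_Int_dense_gdelta)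
qed

theorem mainTheorem6:
  shows "(\<exists>A. A \<subseteq> cball (0::real^2) 1 \<and>
            completely_nonmeasurable plane_null (sets borel) (cball 0 1) A \<and>
            (\<forall>p u. norm u = 1 \<longrightarrow>
               completely_nonmeasurable (line_null p u) (line_borel p u)
                 (orth_proj p u ` sphere 0 1) (orth_proj p u ` A)))
       \<and> (\<exists>A. A \<subseteq> cball (0::real^2) 1 \<and>
            completely_nonmeasurable plane_meager (sets borel) (cball 0 1) A \<and>
            (\<forall>p u. norm u = 1 \<longrightarrow>
               completely_nonmeasurable (line_meager p u) (line_borel p u)
                 (orth_proj p u ` sphere 0 1) (orth_proj p u ` A)))"
  using disc_null_completely_nonmeasurable_projections disc_meager_completely_nonmeasurable_projections
  by (rule conjI)

end
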